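(* Let $G$ be a graph of goods, $n\ge1$, $t\ge 1$ integers, and $c>0$ a real number. Suppose that for every regular collection of $n$ agents (respectively, for every regular collection of $n$ agents of at most $t$ types) with utility functions on $G$ there exists a $c$-sufficient allocation. Then for every collection of $n$ agents with arbitrary utility functions on $G$ (respectively, every collection of $n$ agents of at most $t$ types) there exists a $c$-sufficient allocation.
   Context: A graph of goods is a finite connected graph $G=(V,E)$ whose vertices are goods. A utility function on $G$ assigns a non-negative real number to each good and is extended additively to sets. A $G$-bundle is a subset of $V$ inducing a connected subgraph of $G$ (the empty set allowed). An $n$-split of $G$ is a sequence of $n$ pairwise disjoint $G$-bundles (possibly empty) whose union is $V$. $\mathrm{mms}^{(n)}(G,u)=\max_{P_1,\dots,P_n}\min_i u(P_i)$ over all $n$-splits. An allocation to agents $1,\dots,n$ with utilities $u_1,\dots,u_n$ is an $n$-split $P_1,\dots,P_n$ with $P_i$ given to agent $i$. For $c>0$, the allocation is $c$-sufficient if $u_i(P_i)\ge c\cdot\mathrm{mms}^{(n)}(G,u_i)$ for all $i$. Agents are of the same type if they have the same utility function. An agent with utility $u$ is $n$-proportional if $\mathrm{mms}^{(n)}(G,u)=u(V)/n$, and $n$-regular if moreover $\mathrm{mms}^{(n)}(G,u)=1$. A collection of $n$ agents is regular if every agent in it is $n$-regular. *)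

theory Defs
  imports Complex_Main "HOL-Library.FuncSet"
begin

definition connected_in :: "('a \<times> 'a) set \<Rightarrow> 'a set \<Rightarrow> bool" where
  "connected_in E S \<longleftrightarrow> (\<forall>x\<in>S. \<forall>y\<in>S. (x, y) \<in> (E \<inter> (S \<times> S))\<^sup>*)"

definition graph_of_goods :: "'a set \<Rightarrow> ('a \<times> 'a) set \<Rightarrow> bool" where
  "graph_of_goods V E \<longleftrightarrow> finite V \<and> V \<noteq> {} \<and> E \<subseteq> V \<times> V \<and> sym E \<and> connected_in E V"

definition utility_on :: "'a set \<Rightarrow> ('a \<Rightarrow> real) \<Rightarrow> bool" where
  "utility_on V u \<longleftrightarrow> (\<forall>x\<in>V. u x \<ge> 0)"

definition g_bundle :: "'a set \<Rightarrow> ('a \<times> 'a) set \<Rightarrow> 'a set \<Rightarrow> bool" where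
  "g_bundle V E S \<longleftrightarrow> S \<subseteq> V \<and> connected_in E S"

definition is_split :: "'a set \<Rightarrow> ('a \<times> 'a) set \<Rightarrow> nat \<Rightarrow> (nat \<Rightarrow> 'a set) \<Rightarrow> bool" where
  "is_split V E n P \<longleftrightarrow> (\<forall>i<n. g_bundle V E (P i))
     \<and> (\<forall>i<n. \<forall>j<n. i \<noteq> j \<longrightarrow> P i \<inter> P j = {})
     \<and> (\<Union>i<n. P i) = V"

definition mms :: "'a set \<Rightarrow> ('a \<times> 'a) set \<Rightarrow> nat \<Rightarrow> ('a \<Rightarrow> real) \<Rightarrow> real" where
  "mms V E n u = Max {Min {sum u (P i) | i. i < n} | P. is_split V E n P}"

definition proportional :: "'a set \<Rightarrow> ('a \<times> 'a) set \<Rightarrow> nat \<Rightarrow> ('a \<Rightarrow> real) \<Rightarrow> bool" where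
  "proportional V E n u \<longleftrightarrow> mms V E n u = sum u V / real n"

definition regular :: "'a set \<Rightarrow> ('a \<times> 'a) set \<Rightarrow> nat \<Rightarrow> ('a \<Rightarrow> real) \<Rightarrow> bool" where
  "regular V E n u \<longleftrightarrow> proportional V E n u \<and> mms V E n u = 1"

definition c_sufficient :: "'a set \<Rightarrow> ('a \<times> 'a) set \<Rightarrow> nat \<Rightarrow> real \<Rightarrow> (nat \<Rightarrow> 'a \<Rightarrow> real)
    \<Rightarrow> (nat \<Rightarrow> 'a set) \<Rightarrow> bool" where
  "c_sufficient V E n c us P \<longleftrightarrow> is_split V E n P \<and> (\<forall>i<n. sum (us i) (P i) \<ge> c * mms V E n (us i))"

definition num_types :: "'a set \<Rightarrow> nat \<Rightarrow> (nat \<Rightarrow> 'a \<Rightarrow> real) \<Rightarrow> nat" where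
  "num_types V n us = card ((\<lambda>i. restrict (us i) V) ` {..<n})"

end

theory Submission
  imports Defs
begin

text \<open>An agent whose maximin share is not positive is satisfied by any bundle, and if all agents
  are of this kind any split works. Otherwise, fix an optimal split \<open>Q\<close> for an agent with
  utility \<open>u\<close> and \<open>mms u > 0\<close>, and rescale \<open>u\<close> on each bundle \<open>Q j\<close> so that it has value 1.
  The rescaled utility \<open>v\<close> gives \<open>v V = n\<close> and \<open>mms v \<ge> 1\<close> (witnessed by \<open>Q\<close>), so it is
  \<open>n\<close>-regular, and \<open>mms u \<cdot> v \<le> u\<close> pointwise, since every bundle of \<open>Q\<close> is worth at least
  \<open>mms u\<close>. Hence a \<open>c\<close>-sufficient allocation for the rescaled agents is one for the original
  agents. Agents with \<open>mms \<le> 0\<close> are replaced by a copy of a rescaled agent, and the rescaling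
  only depends on the utility on \<open>V\<close>, so the number of types does not grow.\<close>

lemma is_split_subset: "is_split V E n P \<Longrightarrow> i < n \<Longrightarrow> P i \<subseteq> V"
  by (auto simp: is_split_def g_bundle_def)

lemma is_split_trivial:
  assumes "graph_of_goods V E" "n \<ge> 1"
  shows "is_split V E n (\<lambda>i. if i = 0 then V else {})"
  using assms unfolding is_split_def g_bundle_def graph_of_goods_def
  by (auto simp: connected_in_def)

lemma sum_split:
  assumes "finite V" "is_split V E n P"
  shows "sum u V = (\<Sum>i<n. sum u (P i))"
proof -
  have "V = (\<Union>i<n. P i)" using assms(2) by (simp add: is_split_def)
  moreover have "\<forall>i\<in>{..<n}. finite (P i)"
    using is_split_subset[OF assms(2)] assms(1) finite_subset by blast
  moreover have "\<forall>i\<in>{..<n}. \<forall>j\<in>{..<n}. i \<noteq> j \<longrightarrow> P i \<inter> P j = {}"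
    using assms(2) by (simp add: is_split_def)
  ultimately show ?thesis by (simp add: sum.UNION_disjoint)
qed

lemma finite_split_values:
  assumes "finite V"
  shows "finite {Min {sum u (P i) | i. i < n} | P. is_split V E n P}"
proof -
  have "{Min {sum u (P i) | i. i < n} | P. is_split V E n P}
     \<subseteq> (\<lambda>Q. Min {sum u (Q i) | i. i < n}) ` (PiE {..<n} (\<lambda>_. Pow V))"
  proof
    fix x assume "x \<in> {Min {sum u (P i) | i. i < n} | P. is_split V E n P}"
    then obtain P where P: "is_split V E n P" "x = Min {sum u (P i) | i. i < n}" by blast
    have "restrict P {..<n} \<in> PiE {..<n} (\<lambda>_. Pow V)" using is_split_subset[OF P(1)] by auto
    moreover have "{sum u (restrict P {..<n} i) | i. i < n} = {sum u (P i) | i. i < n}" by auto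
    ultimately show "x \<in> (\<lambda>Q. Min {sum u (Q i) | i. i < n}) ` (PiE {..<n} (\<lambda>_. Pow V))"
      using P(2) by (intro image_eqI[where x="restrict P {..<n}"]) simp_all
  qed
  moreover have "finite (PiE {..<n} (\<lambda>_. Pow V))" using assms by (intro finite_PiE) auto
  ultimately show ?thesis using finite_subset by blast
qed

lemma bundle_values_eq_image: "{sum u (P i) | i. i < n} = (\<lambda>i. sum u (P i)) ` {..<n}"
  by auto

lemma mms_ge_split:
  assumes "graph_of_goods V E" "n \<ge> 1" "is_split V E n P" "\<And>i. i < n \<Longrightarrow> b \<le> sum u (P i)"
  shows "b \<le> mms V E n u"
proof -
  have "(\<lambda>i. sum u (P i)) ` {..<n} \<noteq> {}" using assms(2) by (auto simp: lessThan_empty_iff)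
  then have "b \<le> Min {sum u (P i) | i. i < n}"
    unfolding bundle_values_eq_image using assms(4) by (subst Min_ge_iff) auto
  also have "\<dots> \<le> mms V E n u"
    unfolding mms_def using assms(1,3)
    by (intro Max_ge finite_split_values) (auto simp: graph_of_goods_def)
  finally show ?thesis .
qed

lemma mms_attained:
  assumes "graph_of_goods V E" "n \<ge> 1"
  shows "\<exists>Q. is_split V E n Q \<and> (\<forall>j<n. mms V E n u \<le> sum u (Q j))"
proof -
  have "mms V E n u \<in> {Min {sum u (P i) | i. i < n} | P. is_split V E n P}"
    unfolding mms_def using assms is_split_trivial[OF assms]
    by (intro Max_in finite_split_values) (auto simp: graph_of_goods_def)
  then obtain Q where Q: "is_split V E n Q" "mms V E n u = Min {sum u (Q i) | i. i < n}"
    by blast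
  have "\<forall>j<n. Min {sum u (Q i) | i. i < n} \<le> sum u (Q j)"
    unfolding bundle_values_eq_image by simp
  with Q show ?thesis by auto
qed

lemma mms_le_average:
  assumes "graph_of_goods V E" "n \<ge> 1"
  shows "mms V E n u \<le> sum u V / real n"
proof -
  obtain Q where Q: "is_split V E n Q" "\<forall>j<n. mms V E n u \<le> sum u (Q j)"
    using mms_attained[OF assms] by blast
  have "real n * mms V E n u \<le> (\<Sum>j<n. sum u (Q j))"
    using sum_mono[of "{..<n}" "\<lambda>_. mms V E n u"] Q(2) by simp
  also have "\<dots> = sum u V"
    using sum_split[OF _ Q(1)] assms(1) unfolding graph_of_goods_def by metis
  finally show ?thesis using assms(2) by (simp add: field_simps)
qed

lemma mms_cong:
  assumes "\<And>x. x \<in> V \<Longrightarrow> u x = w x"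
  shows "mms V E n u = mms V E n w"
proof -
  have "{sum u (P i) | i. i < n} = {sum w (P i) | i. i < n}" if "is_split V E n P" for P
  proof -
    have "sum u (P i) = sum w (P i)" if "i < n" for i
      using is_split_subset[OF \<open>is_split V E n P\<close> that] assms by (intro sum.cong) auto
    then show ?thesis by (metis (no_types, lifting))
  qed
  then have "{Min {sum u (P i) | i. i < n} | P. is_split V E n P}
           = {Min {sum w (P i) | i. i < n} | P. is_split V E n P}"
    by (metis (no_types, lifting))
  then show ?thesis by (simp add: mms_def)
qed

text \<open>Off the bundles of \<open>Q\<close> the \<open>THE\<close> is unspecified, but only values on \<open>V\<close> matter.\<close>

definition normalize_along :: "nat \<Rightarrow> (nat \<Rightarrow> 'a set) \<Rightarrow> ('a \<Rightarrow> real) \<Rightarrow> 'a \<Rightarrow> real" where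
  "normalize_along n Q u x = u x / sum u (Q (THE j. j < n \<and> x \<in> Q j))"

lemma normalize_along_eq:
  assumes "is_split V E n Q" "j < n" "x \<in> Q j"
  shows "normalize_along n Q u x = u x / sum u (Q j)"
proof -
  have "(THE j. j < n \<and> x \<in> Q j) = j"
    using assms unfolding is_split_def by (intro the_equality) blast+
  then show ?thesis by (simp add: normalize_along_def)
qed

lemma sum_normalize_along_bundle:
  assumes "is_split V E n Q" "j < n" "sum u (Q j) \<noteq> 0"
  shows "sum (normalize_along n Q u) (Q j) = 1"
proof -
  have "sum (normalize_along n Q u) (Q j) = (\<Sum>x\<in>Q j. u x / sum u (Q j))"
    using normalize_along_eq[OF assms(1,2)] by simp
  also have "\<dots> = 1" using assms(3) by (simp add: sum_divide_distrib[symmetric])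
  finally show ?thesis .
qed

lemma regular_normalize_along:
  assumes "graph_of_goods V E" "n \<ge> 1" "is_split V E n Q" "\<And>j. j < n \<Longrightarrow> sum u (Q j) \<noteq> 0"
  shows "regular V E n (normalize_along n Q u)"
proof -
  let ?v = "normalize_along n Q u"
  have "sum ?v V = (\<Sum>j<n. sum ?v (Q j))"
    using sum_split[OF _ assms(3)] assms(1) unfolding graph_of_goods_def by metis
  also have "\<dots> = real n" using sum_normalize_along_bundle[OF assms(3) _ assms(4)] by simp
  finally have total: "sum ?v V = real n" .
  have "1 \<le> mms V E n ?v"
    using assms(1-3) sum_normalize_along_bundle[OF assms(3) _ assms(4)]
    by (intro mms_ge_split) auto
  moreover have "mms V E n ?v \<le> 1" using mms_le_average[OF assms(1,2), of ?v] total assms(2) by simp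
  ultimately show ?thesis
    unfolding regular_def proportional_def using total assms(2) by simp
qed

lemma normalize_along_scaled_le:
  assumes "utility_on V u" "is_split V E n Q" "0 \<le> m" "\<And>j. j < n \<Longrightarrow> m \<le> sum u (Q j)" "S \<subseteq> V"
  shows "m * sum (normalize_along n Q u) S \<le> sum u S"
proof -
  have "m * normalize_along n Q u x \<le> u x" if "x \<in> V" for x
  proof -
    obtain j where j: "j < n" "x \<in> Q j" using assms(2) \<open>x \<in> V\<close> unfolding is_split_def by blast
    have "m / sum u (Q j) \<le> 1" using assms(3) assms(4)[OF j(1)] by (simp add: divide_le_eq)
    then have "u x * (m / sum u (Q j)) \<le> u x * 1"
      using assms(1) \<open>x \<in> V\<close> unfolding utility_on_def by (intro mult_left_mono) auto
    then show ?thesis using normalize_along_eq[OF assms(2) j] by (simp add: mult.commute)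
  qed
  then show ?thesis using assms(5) by (auto simp: sum_distrib_left intro: sum_mono)
qed

lemma utility_on_normalize_along:
  assumes "utility_on V u" "is_split V E n Q"
  shows "utility_on V (normalize_along n Q u)"
  unfolding utility_on_def
proof
  fix x assume "x \<in> V"
  then obtain j where j: "j < n" "x \<in> Q j" using assms(2) unfolding is_split_def by blast
  have "0 \<le> sum u (Q j)"
    using assms is_split_subset[OF assms(2) j(1)] unfolding utility_on_def by (intro sum_nonneg) auto
  then show "0 \<le> normalize_along n Q u x"
    using normalize_along_eq[OF assms(2) j] assms(1) \<open>x \<in> V\<close> unfolding utility_on_def by simp
qed

definition regularize :: "'a set \<Rightarrow> ('a \<times> 'a) set \<Rightarrow> nat \<Rightarrow> ('a \<Rightarrow> real) \<Rightarrow> 'a \<Rightarrow> real" where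
  "regularize V E n u =
     normalize_along n (SOME Q. is_split V E n Q \<and> (\<forall>j<n. mms V E n u \<le> sum u (Q j))) u"

lemma regularize_eq_normalize_along:
  assumes "graph_of_goods V E" "n \<ge> 1"
  obtains Q where "is_split V E n Q" "\<And>j. j < n \<Longrightarrow> mms V E n u \<le> sum u (Q j)"
    "regularize V E n u = normalize_along n Q u"
  using someI_ex[OF mms_attained[OF assms]] unfolding regularize_def by blast

lemma regularize:
  assumes "graph_of_goods V E" "n \<ge> 1" "utility_on V u" "mms V E n u > 0"
  shows "utility_on V (regularize V E n u)" "regular V E n (regularize V E n u)"
    "\<And>S. S \<subseteq> V \<Longrightarrow> mms V E n u * sum (regularize V E n u) S \<le> sum u S"
proof -
  obtain Q where Q: "is_split V E n Q" "\<And>j. j < n \<Longrightarrow> mms V E n u \<le> sum u (Q j)"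
    and eq: "regularize V E n u = normalize_along n Q u"
    using regularize_eq_normalize_along[OF assms(1,2)] by blast
  show "utility_on V (regularize V E n u)"
    unfolding eq using utility_on_normalize_along[OF assms(3) Q(1)] .
  show "regular V E n (regularize V E n u)"
    unfolding eq using assms(4) Q by (intro regular_normalize_along[OF assms(1,2)]) force+
  show "mms V E n u * sum (regularize V E n u) S \<le> sum u S" if "S \<subseteq> V" for S
    unfolding eq using assms(4) Q that by (intro normalize_along_scaled_le[OF assms(3)]) auto
qed

lemma num_types_comp_restrict_le:
  "num_types V n (\<lambda>i. f (restrict (us i) V)) \<le> num_types V n us"
proof -
  have "(\<lambda>i. restrict (f (restrict (us i) V)) V) ` {..<n}
      = (\<lambda>w. restrict (f w) V) ` (\<lambda>i. restrict (us i) V) ` {..<n}"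
    by (simp add: image_image)
  then show ?thesis unfolding num_types_def by (simp add: card_image_le)
qed

lemma c_mult_mms_le_if_mms_nonpos:
  assumes "c \<ge> 0" "utility_on V u" "mms V E n u \<le> 0" "S \<subseteq> V"
  shows "c * mms V E n u \<le> sum u S"
proof -
  have "c * mms V E n u \<le> 0" using assms(1,3) by (simp add: mult_nonneg_nonpos)
  also have "\<dots> \<le> sum u S" using assms(2,4) unfolding utility_on_def by (intro sum_nonneg) auto
  finally show ?thesis .
qed

lemma c_sufficient_trivial:
  assumes "graph_of_goods V E" "n \<ge> 1" "c \<ge> 0"
    "\<And>i. i < n \<Longrightarrow> utility_on V (us i)" "\<And>i. i < n \<Longrightarrow> mms V E n (us i) \<le> 0"
  shows "c_sufficient V E n c us (\<lambda>i. if i = 0 then V else {})"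
  using is_split_trivial[OF assms(1,2)] is_split_subset[OF is_split_trivial[OF assms(1,2)]]
    c_mult_mms_le_if_mms_nonpos[OF assms(3) assms(4) assms(5)]
  unfolding c_sufficient_def by blast

lemma c_sufficient_transfer:
  assumes "c \<ge> 0" "c_sufficient V E n c vs P" "\<And>i. i < n \<Longrightarrow> utility_on V (us i)"
    "\<And>i. i < n \<Longrightarrow> mms V E n (us i) > 0 \<Longrightarrow> mms V E n (vs i) = 1"
    "\<And>i S. i < n \<Longrightarrow> mms V E n (us i) > 0 \<Longrightarrow> S \<subseteq> V
       \<Longrightarrow> mms V E n (us i) * sum (vs i) S \<le> sum (us i) S"
  shows "c_sufficient V E n c us P"
  unfolding c_sufficient_def
proof (intro conjI allI impI)
  show split: "is_split V E n P" using assms(2) by (simp add: c_sufficient_def)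
  fix i assume i: "i < n"
  have sub: "P i \<subseteq> V" using is_split_subset[OF split i] .
  show "c * mms V E n (us i) \<le> sum (us i) (P i)"
  proof (cases "mms V E n (us i) > 0")
    case True
    have "c \<le> sum (vs i) (P i)"
      using assms(2) assms(4)[OF i True] i unfolding c_sufficient_def by force
    then have "c * mms V E n (us i) \<le> sum (vs i) (P i) * mms V E n (us i)"
      using True by (intro mult_right_mono) auto
    also have "\<dots> \<le> sum (us i) (P i)" using assms(5)[OF i True sub] by (simp add: mult.commute)
    finally show ?thesis .
  next
    case False
    then show ?thesis using c_mult_mms_le_if_mms_nonpos[OF assms(1) assms(3)[OF i] _ sub] by simp
  qed
qed

lemma c_sufficient_from_regular:
  assumes G: "graph_of_goods V E" and n: "n \<ge> 1" and c: "c \<ge> 0"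
    and us: "\<And>i. i < n \<Longrightarrow> utility_on V (us i)"
    and regular_case: "\<And>vs. \<forall>i<n. utility_on V (vs i) \<and> regular V E n (vs i)
       \<Longrightarrow> num_types V n vs \<le> num_types V n us \<Longrightarrow> \<exists>P. c_sufficient V E n c vs P"
  shows "\<exists>P. c_sufficient V E n c us P"
proof (cases "\<forall>i<n. mms V E n (us i) \<le> 0")
  case True
  then show ?thesis using c_sufficient_trivial[OF G n c, of us] us by blast
next
  case False
  then obtain k where k: "k < n" "mms V E n (us k) > 0" by force
  \<comment> \<open>Working with \<open>restrict (us i) V\<close> makes \<open>vs i\<close> a function of the type of agent \<open>i\<close>.\<close>
  define vs where "vs i = regularize V E n
      (if mms V E n (restrict (us i) V) > 0 then restrict (us i) V else restrict (us k) V)" for i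
  have mms_restrict: "mms V E n (restrict (us i) V) = mms V E n (us i)" for i
    by (rule mms_cong) simp
  have restrict_utility: "utility_on V (restrict (us i) V)" if "i < n" for i
    using us[OF that] by (simp add: utility_on_def)
  have positive: "mms V E n (if mms V E n (restrict (us i) V) > 0 then restrict (us i) V
      else restrict (us k) V) > 0" for i
    using k(2) by (simp add: mms_restrict)
  have regular_vs: "\<forall>i<n. utility_on V (vs i) \<and> regular V E n (vs i)"
    using regularize(1,2)[OF G n _ positive] restrict_utility k(1) unfolding vs_def by simp
  have "num_types V n vs \<le> num_types V n us"
    unfolding vs_def by (rule num_types_comp_restrict_le)
  then obtain P where P: "c_sufficient V E n c vs P" using regular_case[OF regular_vs] by blast
  have scaled_le: "mms V E n (us i) * sum (vs i) S \<le> sum (us i) S"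
    if "i < n" "mms V E n (us i) > 0" "S \<subseteq> V" for i S
  proof -
    have "sum (restrict (us i) V) S = sum (us i) S" using \<open>S \<subseteq> V\<close> by (intro sum.cong) auto
    then show ?thesis
      using regularize(3)[OF G n restrict_utility[OF \<open>i < n\<close>], of S] that
      by (simp add: vs_def mms_restrict)
  qed
  have mms_one: "mms V E n (vs i) = 1" if "i < n" for i
    using regular_vs that by (simp add: regular_def)
  show ?thesis using c_sufficient_transfer[OF c P us mms_one scaled_le] by blast
qed

theorem proposition2p3:
  fixes V :: "'a set" and E :: "('a \<times> 'a) set" and n t :: nat and c :: real
  assumes "graph_of_goods V E" and "n \<ge> 1" and "t \<ge> 1" and "c > 0"
  shows "((\<forall>us. (\<forall>i<n. utility_on V (us i) \<and> regular V E n (us i))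
              \<longrightarrow> (\<exists>P. c_sufficient V E n c us P))
          \<longrightarrow> (\<forall>us. (\<forall>i<n. utility_on V (us i))
              \<longrightarrow> (\<exists>P. c_sufficient V E n c us P)))
       \<and> ((\<forall>us. (\<forall>i<n. utility_on V (us i) \<and> regular V E n (us i)) \<and> num_types V n us \<le> t
              \<longrightarrow> (\<exists>P. c_sufficient V E n c us P))
          \<longrightarrow> (\<forall>us. (\<forall>i<n. utility_on V (us i)) \<and> num_types V n us \<le> t
              \<longrightarrow> (\<exists>P. c_sufficient V E n c us P)))"
proof (intro conjI impI allI)
  fix us
  assume regular_case: "\<forall>vs. (\<forall>i<n. utility_on V (vs i) \<and> regular V E n (vs i))
            \<longrightarrow> (\<exists>P. c_sufficient V E n c vs P)"
    and utility: "\<forall>i<n. utility_on V (us i)"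
  show "\<exists>P. c_sufficient V E n c us P"
  proof (rule c_sufficient_from_regular[OF assms(1,2) less_imp_le[OF assms(4)]])
    show "utility_on V (us i)" if "i < n" for i using utility that by blast
    show "\<exists>P. c_sufficient V E n c vs P"
      if "\<forall>i<n. utility_on V (vs i) \<and> regular V E n (vs i)" for vs
      using regular_case that by blast
  qed
next
  fix us
  assume regular_case: "\<forall>vs. (\<forall>i<n. utility_on V (vs i) \<and> regular V E n (vs i))
            \<and> num_types V n vs \<le> t \<longrightarrow> (\<exists>P. c_sufficient V E n c vs P)"
    and utility: "(\<forall>i<n. utility_on V (us i)) \<and> num_types V n us \<le> t"
  show "\<exists>P. c_sufficient V E n c us P"
  proof (rule c_sufficient_from_regular[OF assms(1,2) less_imp_le[OF assms(4)]])
    show "utility_on V (us i)" if "i < n" for i using utility that by blast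
    show "\<exists>P. c_sufficient V E n c vs P"
      if "\<forall>i<n. utility_on V (vs i) \<and> regular V E n (vs i)"
        and "num_types V n vs \<le> num_types V n us" for vs
      using regular_case that utility by (meson order_trans)
  qed
qed

end
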